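(* Let $E_1,E_2$ be operator spaces of common finite dimension $k$, with bases $(e^1_1,\dots,e^1_k)$ of $E_1$ and $(e^2_1,\dots,e^2_k)$ of $E_2$ that are completely $1$-unconditional: for every $\varepsilon=(\varepsilon_1,\dots,\varepsilon_k)\in\{-1,1\}^k$, the maps $V^1_\varepsilon\colon E_1\to E_1$, $V^1_\varepsilon(e^1_i)=\varepsilon_ie^1_i$, and $V^2_\varepsilon\colon E_2\to E_2$, $V^2_\varepsilon(e^2_i)=\varepsilon_ie^2_i$, are complete contractions. Let $\Delta\colon E_1\otimes_hE_2\to E_1\otimes_hE_2$ be defined by $\Delta(e^1_i\otimes e^2_j)=0$ if $i\neq j$ and $\Delta(e^1_i\otimes e^2_i)=e^1_i\otimes e^2_i$. Then $\Delta$ is a complete contraction.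
   Context: $\otimes_h$ denotes the Haagerup tensor product of operator spaces. *)

theory Defs
  imports Complex_Main
begin

text \<open>Concrete model of finite-dimensional (abstract, Ruan) operator spaces with a fixed basis.
An element of the n x p matrix space over a space with basis indexed by B is a function
x r c b (row r, column c, coefficient of basis vector b), zero outside the range.\<close>

type_synonym 'b emat = "nat \<Rightarrow> nat \<Rightarrow> 'b \<Rightarrow> complex"
type_synonym cmat = "nat \<Rightarrow> nat \<Rightarrow> complex"

definition mats :: "nat \<Rightarrow> nat \<Rightarrow> 'b set \<Rightarrow> 'b emat set" where
  "mats n p B = {x. \<forall>r c b. x r c b \<noteq> 0 \<longrightarrow> r < n \<and> c < p \<and> b \<in> B}"

definition smats :: "nat \<Rightarrow> nat \<Rightarrow> cmat set" where
  "smats n p = {a. \<forall>r c. a r c \<noteq> 0 \<longrightarrow> r < n \<and> c < p}"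

definition vnorm :: "nat \<Rightarrow> (nat \<Rightarrow> complex) \<Rightarrow> real" where
  "vnorm n v = sqrt (\<Sum>j<n. (cmod (v j))^2)"

definition opnorm :: "nat \<Rightarrow> nat \<Rightarrow> cmat \<Rightarrow> real" where
  "opnorm n p a = Sup {vnorm n (\<lambda>r. \<Sum>c<p. a r c * v c) | v. vnorm p v \<le> 1}"

definition mmul :: "nat \<Rightarrow> nat \<Rightarrow> cmat \<Rightarrow> 'b emat \<Rightarrow> cmat \<Rightarrow> 'b emat" where
  "mmul n p \<alpha> x \<beta> = (\<lambda>r c b. \<Sum>s<n. \<Sum>t<p. \<alpha> r s * x s t b * \<beta> t c)"

definition dsum :: "nat \<Rightarrow> 'b emat \<Rightarrow> 'b emat \<Rightarrow> 'b emat" where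
  "dsum n x y = (\<lambda>r c b. if r < n \<and> c < n then x r c b
                          else if n \<le> r \<and> n \<le> c then y (r - n) (c - n) b else 0)"

text \<open>N n is the norm on M_n(E); Ruan's axioms.\<close>
definition opspace :: "(nat \<Rightarrow> 'b emat \<Rightarrow> real) \<Rightarrow> 'b set \<Rightarrow> bool" where
  "opspace N B \<longleftrightarrow> finite B \<and>
     (\<forall>n. \<forall>x\<in>mats n n B. 0 \<le> N n x \<and> (N n x = 0 \<longleftrightarrow> x = (\<lambda>_ _ _. 0))) \<and>
     (\<forall>n. \<forall>x\<in>mats n n B. \<forall>y\<in>mats n n B. N n (\<lambda>r c b. x r c b + y r c b) \<le> N n x + N n y) \<and>
     (\<forall>n a. \<forall>x\<in>mats n n B. N n (\<lambda>r c b. a * x r c b) = cmod a * N n x) \<and>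
     (\<forall>m n \<alpha> x \<beta>. \<alpha> \<in> smats m n \<longrightarrow> x \<in> mats n n B \<longrightarrow> \<beta> \<in> smats n m \<longrightarrow>
        N m (mmul n n \<alpha> x \<beta>) \<le> opnorm m n \<alpha> * N n x * opnorm n m \<beta>) \<and>
     (\<forall>n m x y. x \<in> mats n n B \<longrightarrow> y \<in> mats m m B \<longrightarrow>
        N (n + m) (dsum n x y) = max (N n x) (N m y))"

definition ampl :: "(('b \<Rightarrow> complex) \<Rightarrow> ('c \<Rightarrow> complex)) \<Rightarrow> 'b emat \<Rightarrow> 'c emat" where
  "ampl T x = (\<lambda>r c. T (x r c))"

definition completely_contractive ::
  "(nat \<Rightarrow> 'b emat \<Rightarrow> real) \<Rightarrow> (nat \<Rightarrow> 'c emat \<Rightarrow> real) \<Rightarrow> 'b set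
     \<Rightarrow> (('b \<Rightarrow> complex) \<Rightarrow> ('c \<Rightarrow> complex)) \<Rightarrow> bool" where
  "completely_contractive N M B T \<longleftrightarrow> (\<forall>n. \<forall>x\<in>mats n n B. M n (ampl T x) \<le> N n x)"

definition compl_1_uncond :: "(nat \<Rightarrow> nat emat \<Rightarrow> real) \<Rightarrow> nat \<Rightarrow> bool" where
  "compl_1_uncond N k \<longleftrightarrow> (\<forall>\<epsilon> :: nat \<Rightarrow> real. (\<forall>i<k. \<epsilon> i \<in> {-1, 1}) \<longrightarrow>
      completely_contractive N N {..<k} (\<lambda>v i. complex_of_real (\<epsilon> i) * v i))"

text \<open>x (n x p over E1) tensor-multiplied with y (p x q over E2), basis of E1 (x) E2 is
 e_i (x) e_j indexed by (i,j).\<close>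
definition htens :: "nat \<Rightarrow> nat emat \<Rightarrow> nat emat \<Rightarrow> (nat \<times> nat) emat" where
  "htens p x y = (\<lambda>r c ij. \<Sum>s<p. x r s (fst ij) * y s c (snd ij))"

text \<open>Haagerup norm on M_n(E1 (x)_h E2); rectangular norms are the norms of the zero-padded
square matrices.\<close>
definition hnorm :: "(nat \<Rightarrow> nat emat \<Rightarrow> real) \<Rightarrow> (nat \<Rightarrow> nat emat \<Rightarrow> real) \<Rightarrow> nat
     \<Rightarrow> nat \<Rightarrow> (nat \<times> nat) emat \<Rightarrow> real" where
  "hnorm N1 N2 k n u = Inf {N1 (max n p) x * N2 (max p n) y | p x y.
      x \<in> mats n p {..<k} \<and> y \<in> mats p n {..<k} \<and> u = htens p x y}"

definition diagproj :: "((nat \<times> nat) \<Rightarrow> complex) \<Rightarrow> ((nat \<times> nat) \<Rightarrow> complex)" where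
  "diagproj v = (\<lambda>ij. if fst ij = snd ij then v ij else 0)"

end

theory Submission
  imports Defs "HOL-Analysis.Convex"
begin

text \<open>Averaging over sign changes. Take sign vectors g_0, ..., g_{M-1} in {-1,1}^k with
  sum_m g_m(i) g_m(j) = M delta_ij (all of {-1,1}^k will do). If u = x \<odot> y, then
  Delta(u) = M^{-1} sum_m V_{g_m}(x) \<odot> V_{g_m}(y), which is the product of the block row
  M^{-1/2} [V_{g_0}(x) ... V_{g_{M-1}}(x)] with the corresponding block column. The block row is
  M^{-1/2} [I ... I] times the block diagonal matrix with blocks V_{g_m}(x); by the Schur test the
  scalar factor has norm 1, and by Ruan's axioms the block diagonal matrix has the norm of its
  largest block, which complete 1-unconditionality bounds by the norm of x. So every factorization
  of u yields one of Delta(u) that is no longer.\<close>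

section \<open>Ruan's axioms\<close>

lemma opspace_nonneg: "opspace N B \<Longrightarrow> x \<in> mats n n B \<Longrightarrow> 0 \<le> N n x"
  unfolding opspace_def by blast

lemma zero_mats [simp]: "(\<lambda>_ _ _. 0) \<in> mats n p B"
  by (simp add: mats_def)

lemma opspace_zero: "opspace N B \<Longrightarrow> N n (\<lambda>_ _ _. 0) = 0"
  unfolding opspace_def using zero_mats by blast

lemma opspace_mmul: "opspace N B \<Longrightarrow> \<alpha> \<in> smats m n \<Longrightarrow> x \<in> mats n n B \<Longrightarrow> \<beta> \<in> smats n m \<Longrightarrow>
    N m (mmul n n \<alpha> x \<beta>) \<le> opnorm m n \<alpha> * N n x * opnorm n m \<beta>"
  unfolding opspace_def by blast

lemma opspace_dsum: "opspace N B \<Longrightarrow> x \<in> mats n n B \<Longrightarrow> y \<in> mats m m B \<Longrightarrow>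
    N (n + m) (dsum n x y) = max (N n x) (N m y)"
  unfolding opspace_def by blast

lemma mats_mono: "x \<in> mats n p B \<Longrightarrow> n \<le> n' \<Longrightarrow> p \<le> p' \<Longrightarrow> x \<in> mats n' p' B"
  unfolding mats_def by (auto intro: less_le_trans)

section \<open>Block indices\<close>

lemma block_index:
  fixes q :: nat assumes "t < q" shows "(m*q + t) div q = m" "(m*q + t) mod q = t"
  using assms by simp_all

lemma block_index_less: "m < M \<Longrightarrow> t < (q::nat) \<Longrightarrow> m*q + t < M*q"
  by (metis add.commute less_le_trans mult_le_mono1 mult_Suc nat_add_left_cancel_less Suc_leI)

lemma div_mod_eq_iff: "t < q \<Longrightarrow> (s div q = m \<and> s mod q = t) \<longleftrightarrow> s = m*q + (t::nat)"
  by (auto simp: div_mult_mod_eq)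

lemma sum_lessThan_mult_nat:
  fixes f :: "nat \<Rightarrow> 'a::comm_monoid_add"
  shows "(\<Sum>s<M*q. f s) = (\<Sum>m<M. \<Sum>t<q. f (m*q + t))"
proof -
  have "(\<Sum>s<M*q. f s) = (\<Sum>m<M. sum f {m*q..<m*q + q})"
    by (rule sum.nat_group[symmetric])
  also have "\<dots> = (\<Sum>m<M. \<Sum>t<q. f (m*q + t))"
    by (simp add: sum.shift_bounds_nat_ivl[of f 0 _ q, simplified] lessThan_atLeast0 add.commute)
  finally show ?thesis .
qed

section \<open>The Schur test\<close>

lemma weighted_Cauchy_Schwarz_sum:
  fixes w b :: "'a \<Rightarrow> real"
  assumes "\<And>i. i \<in> I \<Longrightarrow> 0 \<le> w i"
  shows "(\<Sum>i\<in>I. w i * b i)\<^sup>2 \<le> (\<Sum>i\<in>I. w i) * (\<Sum>i\<in>I. w i * (b i)\<^sup>2)"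
proof -
  have "(\<Sum>i\<in>I. w i * b i) = (\<Sum>i\<in>I. sqrt (w i) * (sqrt (w i) * b i))"
    by (rule sum.cong) (use assms in \<open>auto simp: real_sqrt_mult_self mult.assoc[symmetric]\<close>)
  moreover have "(\<Sum>i\<in>I. w i) = (\<Sum>i\<in>I. (sqrt (w i))\<^sup>2)"
    by (rule sum.cong) (use assms in auto)
  moreover have "(\<Sum>i\<in>I. w i * (b i)\<^sup>2) = (\<Sum>i\<in>I. (sqrt (w i) * b i)\<^sup>2)"
    by (rule sum.cong) (use assms in \<open>auto simp: power_mult_distrib\<close>)
  ultimately show ?thesis
    using Cauchy_Schwarz_ineq_sum[of "\<lambda>i. sqrt (w i)" "\<lambda>i. sqrt (w i) * b i" I] by simp
qed

lemma vnorm_le_Schur: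
  assumes row: "\<And>r. r < n \<Longrightarrow> (\<Sum>c<p. cmod (a r c)) \<le> R"
    and col: "\<And>c. c < p \<Longrightarrow> (\<Sum>r<n. cmod (a r c)) \<le> C" and R: "0 \<le> R" and C: "0 \<le> C"
    and v: "vnorm p v \<le> 1"
  shows "vnorm n (\<lambda>r. \<Sum>c<p. a r c * v c) \<le> sqrt (R*C)"
proof -
  have row_bound: "(cmod (\<Sum>c<p. a r c * v c))\<^sup>2 \<le> R * (\<Sum>c<p. cmod (a r c) * (cmod (v c))\<^sup>2)"
    if "r < n" for r
  proof -
    have "cmod (\<Sum>c<p. a r c * v c) \<le> (\<Sum>c<p. cmod (a r c) * cmod (v c))"
      using norm_sum[of "\<lambda>c. a r c * v c" "{..<p}"] by (simp add: norm_mult)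
    then have "(cmod (\<Sum>c<p. a r c * v c))\<^sup>2 \<le> (\<Sum>c<p. cmod (a r c) * cmod (v c))\<^sup>2"
      by (simp add: power_mono)
    also have "\<dots> \<le> (\<Sum>c<p. cmod (a r c)) * (\<Sum>c<p. cmod (a r c) * (cmod (v c))\<^sup>2)"
      by (rule weighted_Cauchy_Schwarz_sum) simp
    also have "\<dots> \<le> R * (\<Sum>c<p. cmod (a r c) * (cmod (v c))\<^sup>2)"
      by (rule mult_right_mono[OF row[OF that]]) (simp add: sum_nonneg)
    finally show ?thesis .
  qed
  have "(\<Sum>r<n. (cmod (\<Sum>c<p. a r c * v c))\<^sup>2) \<le> (\<Sum>r<n. R * (\<Sum>c<p. cmod (a r c) * (cmod (v c))\<^sup>2))"
    by (rule sum_mono) (use row_bound in simp)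
  also have "\<dots> = R * (\<Sum>c<p. (\<Sum>r<n. cmod (a r c)) * (cmod (v c))\<^sup>2)"
    unfolding sum_distrib_left sum_distrib_right by (subst sum.swap) (simp add: mult.assoc)
  also have "\<dots> \<le> R * (\<Sum>c<p. C * (cmod (v c))\<^sup>2)"
    by (rule mult_left_mono[OF sum_mono[OF mult_right_mono[OF col]]]) (use R in auto)
  also have "\<dots> = R * C * (\<Sum>c<p. (cmod (v c))\<^sup>2)"
    by (simp add: sum_distrib_left mult.assoc)
  also have "\<dots> \<le> R * C"
    using v R C by (intro mult_left_le) (auto simp: vnorm_def)
  finally show ?thesis
    unfolding vnorm_def by (rule real_sqrt_le_mono)
qed

lemma opnorm_Schur_test:
  assumes row: "\<And>r. r < n \<Longrightarrow> (\<Sum>c<p. cmod (a r c)) \<le> R"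
    and col: "\<And>c. c < p \<Longrightarrow> (\<Sum>r<n. cmod (a r c)) \<le> C" and "0 \<le> R" "0 \<le> C"
  shows "opnorm n p a \<le> sqrt (R*C)" and "0 \<le> opnorm n p a"
proof -
  define T where "T = {vnorm n (\<lambda>r. \<Sum>c<p. a r c * v c) | v. vnorm p v \<le> 1}"
  have zero: "0 \<in> T"
    unfolding T_def by (rule CollectI, rule exI[of _ "\<lambda>_. 0"]) (simp add: vnorm_def)
  have ub: "t \<le> sqrt (R*C)" if "t \<in> T" for t
  proof -
    from that obtain v where "t = vnorm n (\<lambda>r. \<Sum>c<p. a r c * v c)" "vnorm p v \<le> 1"
      unfolding T_def by blast
    then show ?thesis
      using vnorm_le_Schur[OF assms] by simp
  qed
  show "opnorm n p a \<le> sqrt (R*C)"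
    unfolding opnorm_def T_def[symmetric] by (rule cSup_least) (use zero ub in auto)
  show "0 \<le> opnorm n p a"
    unfolding opnorm_def T_def[symmetric] by (rule cSup_upper[OF zero], rule bdd_aboveI, rule ub)
qed

lemma sum_if_eq_le:
  fixes c :: real and a n :: nat assumes "0 \<le> c"
  shows "(\<Sum>x<n. if x = a \<and> Q then c else 0) \<le> c"
  using assms by (cases Q) (simp_all add: sum.delta)

section \<open>Block matrices\<close>

definition idmat :: "nat \<Rightarrow> cmat" where
  "idmat n = (\<lambda>r c. if r < n \<and> r = c then 1 else 0)"

text \<open>The q x Mq matrix M^{-1/2} [I_q ... I_q], an element of the Mq x Mq matrix space.\<close>
definition identity_row :: "nat \<Rightarrow> nat \<Rightarrow> cmat" where
  "identity_row q M = (\<lambda>r s. if r < q \<and> s < M*q \<and> s mod q = r then of_real (1 / sqrt M) else 0)"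

definition identity_col :: "nat \<Rightarrow> nat \<Rightarrow> cmat" where
  "identity_col q M = (\<lambda>s c. identity_row q M c s)"

lemma idmat_smats: "idmat n \<in> smats n n"
  by (simp add: smats_def idmat_def)

lemma identity_row_smats: "identity_row q M \<in> smats (M*q) (M*q)"
  unfolding smats_def identity_row_def by (auto intro: le_less_trans[OF mod_less_eq_dividend])

lemma identity_col_smats: "identity_col q M \<in> smats (M*q) (M*q)"
  using identity_row_smats unfolding smats_def identity_col_def by blast

lemma opnorm_idmat: "opnorm n n (idmat n) \<le> 1" "0 \<le> opnorm n n (idmat n)"
proof -
  have "(\<Sum>c<n. cmod (idmat n r c)) = (\<Sum>c<n. if c = r \<and> r < n then 1 else 0)"
    "(\<Sum>c<n. cmod (idmat n c r)) = (\<Sum>c<n. if c = r \<and> r < n then 1 else 0)" for r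
    by (auto simp: idmat_def intro!: sum.cong)
  then have "(\<Sum>c<n. cmod (idmat n r c)) \<le> 1" "(\<Sum>c<n. cmod (idmat n c r)) \<le> 1" for r
    by (simp_all add: sum_if_eq_le)
  then show "opnorm n n (idmat n) \<le> 1" "0 \<le> opnorm n n (idmat n)"
    using opnorm_Schur_test[where n=n and p=n and a="idmat n" and R=1 and C=1] by simp_all
qed

lemma identity_row_abs_sums:
  "(\<Sum>s<M*q. cmod (identity_row q M r s)) \<le> sqrt M"
  "(\<Sum>r<M*q. cmod (identity_row q M r s)) \<le> 1 / sqrt M"
proof -
  have "(\<Sum>s<M*q. cmod (identity_row q M r s))
      = (\<Sum>m<M. \<Sum>t<q. if t = r \<and> r < q then 1 / sqrt M else 0)"
    unfolding sum_lessThan_mult_nat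
    by (intro sum.cong refl) (auto simp: identity_row_def block_index block_index_less norm_divide)
  also have "\<dots> \<le> (\<Sum>m<M. 1 / sqrt M)"
    by (intro sum_mono sum_if_eq_le) simp
  also have "\<dots> = sqrt M"
    by (cases "M = 0") (simp_all add: real_div_sqrt)
  finally show "(\<Sum>s<M*q. cmod (identity_row q M r s)) \<le> sqrt M" .
  have "s mod q < q" if "s < M*q"
    using that by (cases "q = 0") simp_all
  then have "(\<Sum>r<M*q. cmod (identity_row q M r s))
      = (\<Sum>r<M*q. if r = s mod q \<and> s < M*q then 1 / sqrt M else 0)"
    by (intro sum.cong refl) (auto simp: identity_row_def norm_divide)
  also have "\<dots> \<le> 1 / sqrt M"
    by (rule sum_if_eq_le) simp
  finally show "(\<Sum>r<M*q. cmod (identity_row q M r s)) \<le> 1 / sqrt M" .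
qed

lemma opnorm_identity_row:
  "opnorm (M*q) (M*q) (identity_row q M) \<le> 1" "0 \<le> opnorm (M*q) (M*q) (identity_row q M)"
proof -
  have "sqrt (sqrt M * (1 / sqrt M)) \<le> 1"
    by (cases "M = 0") simp_all
  with opnorm_Schur_test(1)[where R="sqrt M" and C="1 / sqrt M", OF identity_row_abs_sums]
  show "opnorm (M*q) (M*q) (identity_row q M) \<le> 1"
    by (rule order_trans) simp_all
  show "0 \<le> opnorm (M*q) (M*q) (identity_row q M)"
    by (rule opnorm_Schur_test(2)[where R="sqrt M" and C="1 / sqrt M", OF identity_row_abs_sums]) simp_all
qed

lemma opnorm_identity_col:
  "opnorm (M*q) (M*q) (identity_col q M) \<le> 1" "0 \<le> opnorm (M*q) (M*q) (identity_col q M)"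
proof -
  have "sqrt (1 / sqrt M * sqrt M) \<le> 1"
    by (cases "M = 0") simp_all
  with opnorm_Schur_test(1)[where R="1 / sqrt M" and C="sqrt M" and n="M*q" and p="M*q" and a="identity_col q M"]
  show "opnorm (M*q) (M*q) (identity_col q M) \<le> 1"
    by (rule order_trans) (simp_all add: identity_col_def identity_row_abs_sums)
  show "0 \<le> opnorm (M*q) (M*q) (identity_col q M)"
    by (rule opnorm_Schur_test(2)[where R="1 / sqrt M" and C="sqrt M"])
      (simp_all add: identity_col_def identity_row_abs_sums)
qed

definition block_diag :: "nat \<Rightarrow> nat \<Rightarrow> (nat \<Rightarrow> 'b emat) \<Rightarrow> 'b emat" where
  "block_diag q M z = (\<lambda>s t b. if s < M*q \<and> t < M*q \<and> s div q = t div q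
                               then z (s div q) (s mod q) (t mod q) b else 0)"

definition block_row :: "nat \<Rightarrow> nat \<Rightarrow> (nat \<Rightarrow> 'b emat) \<Rightarrow> 'b emat" where
  "block_row q M z = (\<lambda>r c b. if c < M*q then z (c div q) r (c mod q) b / sqrt M else 0)"

definition block_col :: "nat \<Rightarrow> nat \<Rightarrow> (nat \<Rightarrow> 'b emat) \<Rightarrow> 'b emat" where
  "block_col q M z = (\<lambda>r c b. if r < M*q then z (r div q) (r mod q) c b / sqrt M else 0)"

lemma block_diag_mats:
  assumes "\<And>m. m < M \<Longrightarrow> z m \<in> mats q q B"
  shows "block_diag q M z \<in> mats (M*q) (M*q) B"
  using assms less_mult_imp_div_less unfolding mats_def block_diag_def mem_Collect_eq
  by (metis (no_types, lifting))

lemma block_row_mats: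
  assumes "\<And>m. m < M \<Longrightarrow> z m \<in> mats n q B"
  shows "block_row q M z \<in> mats n (M*q) B"
  using assms less_mult_imp_div_less unfolding mats_def block_row_def mem_Collect_eq
  by (metis (no_types, lifting) divide_eq_0_iff)

lemma block_col_mats:
  assumes "\<And>m. m < M \<Longrightarrow> z m \<in> mats q n B"
  shows "block_col q M z \<in> mats (M*q) n B"
  using assms less_mult_imp_div_less unfolding mats_def block_col_def mem_Collect_eq
  by (metis (no_types, lifting) divide_eq_0_iff)

lemma block_diag_Suc:
  assumes z: "z M \<in> mats q q B"
  shows "block_diag q (Suc M) z = dsum (M*q) (block_diag q M z) (z M)"
proof (intro ext)
  fix s t b
  have last_block: "s div q = M" "s mod q = s - M*q" if "M*q \<le> s" "s < M*q + q" for s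
    using block_index[of "s - M*q" q M] that by simp_all
  have "s div q \<noteq> t div q" if "s < M*q" "M*q \<le> t" for s t
    using less_mult_imp_div_less[OF that(1)] div_le_mono[OF that(2), of q] that
    by (cases "q = 0") auto
  moreover have "z M (s - M*q) (t - M*q) b = 0" if "\<not> (s < M*q + q \<and> t < M*q + q)"
    using z that unfolding mats_def by fastforce
  ultimately show "block_diag q (Suc M) z s t b = dsum (M*q) (block_diag q M z) (z M) s t b"
    using last_block[of s] last_block[of t]
    by (cases "s < M*q + q \<and> t < M*q + q") (auto simp: block_diag_def dsum_def)
qed

lemma norm_block_diag_le:
  assumes N: "opspace N B" and z: "\<And>m. m < M \<Longrightarrow> z m \<in> mats q q B"
    and bound: "\<And>m. m < M \<Longrightarrow> N q (z m) \<le> a" and "0 \<le> a"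
  shows "N (M*q) (block_diag q M z) \<le> a"
  using z bound
proof (induction M)
  case 0
  have "block_diag q 0 z = (\<lambda>_ _ _. 0)"
    by (simp add: block_diag_def)
  with opspace_zero[OF N] \<open>0 \<le> a\<close> show ?case
    by simp
next
  case (Suc M)
  have "N (Suc M * q) (block_diag q (Suc M) z) = N (M*q + q) (dsum (M*q) (block_diag q M z) (z M))"
    using block_diag_Suc[OF Suc.prems(1)] by (simp add: add.commute)
  also have "\<dots> = max (N (M*q) (block_diag q M z)) (N q (z M))"
    using Suc.prems by (intro opspace_dsum[OF N] block_diag_mats) auto
  also have "\<dots> \<le> a"
    using Suc by simp
  finally show ?case .
qed

lemma mmul_idmat_right:
  "mmul n n \<alpha> x (idmat n) = (\<lambda>r c b. if c < n then \<Sum>s<n. \<alpha> r s * x s c b else 0)"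
proof (intro ext)
  fix r c b
  have "mmul n n \<alpha> x (idmat n) r c b = (\<Sum>s<n. \<alpha> r s * (\<Sum>t<n. x s t b * idmat n t c))"
    by (simp add: mmul_def sum_distrib_left mult.assoc)
  also have "\<dots> = (if c < n then \<Sum>s<n. \<alpha> r s * x s c b else 0)"
    by (simp add: idmat_def if_distrib[of "\<lambda>u. _ * u"] sum.delta cong: if_cong)
  finally show "mmul n n \<alpha> x (idmat n) r c b = (if c < n then \<Sum>s<n. \<alpha> r s * x s c b else 0)" .
qed

lemma mmul_idmat_left:
  "mmul n n (idmat n) x \<beta> = (\<lambda>r c b. if r < n then \<Sum>t<n. x r t b * \<beta> t c else 0)"
proof (intro ext)
  fix r c b
  have "mmul n n (idmat n) x \<beta> r c b = (\<Sum>s<n. idmat n r s * (\<Sum>t<n. x s t b * \<beta> t c))"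
    by (simp add: mmul_def sum_distrib_left mult.assoc)
  also have "\<dots> = (if r < n then \<Sum>t<n. x r t b * \<beta> t c else 0)"
    by (simp add: idmat_def if_distrib[of "\<lambda>u. u * _"] sum.delta' cong: if_cong)
  finally show "mmul n n (idmat n) x \<beta> r c b = (if r < n then \<Sum>t<n. x r t b * \<beta> t c else 0)" .
qed

lemma identity_row_mult_block_diag:
  assumes "r < q" "c < M*q"
  shows "identity_row q M r s * block_diag q M z s c b
    = (if s = (c div q)*q + r then z (c div q) r (c mod q) b / sqrt M else 0)"
proof (cases "s = (c div q)*q + r")
  case True
  with assms show ?thesis
    using block_index_less[OF less_mult_imp_div_less[OF assms(2)] assms(1)]
    by (simp add: identity_row_def block_diag_def block_index divide_inverse mult.commute)
next
  case False
  with assms(1) show ?thesis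
    by (auto simp: identity_row_def block_diag_def div_mod_eq_iff[symmetric])
qed

lemma block_diag_mult_identity_col:
  assumes "c < q" "s < M*q"
  shows "block_diag q M z s t b * identity_col q M t c
    = (if t = (s div q)*q + c then z (s div q) (s mod q) c b / sqrt M else 0)"
proof (cases "t = (s div q)*q + c")
  case True
  with assms show ?thesis
    using block_index_less[OF less_mult_imp_div_less[OF assms(2)] assms(1)]
    by (simp add: identity_col_def identity_row_def block_diag_def block_index divide_inverse)
next
  case False
  with assms(1) show ?thesis
    by (auto simp: identity_col_def identity_row_def block_diag_def div_mod_eq_iff[symmetric])
qed

lemma block_row_eq_mmul:
  assumes z: "\<And>m. m < M \<Longrightarrow> z m \<in> mats q q B"
  shows "block_row q M z = mmul (M*q) (M*q) (identity_row q M) (block_diag q M z) (idmat (M*q))"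
proof (intro ext)
  fix r c b
  show "block_row q M z r c b
      = mmul (M*q) (M*q) (identity_row q M) (block_diag q M z) (idmat (M*q)) r c b"
  proof (cases "r < q \<and> c < M*q")
    case True
    then have "(c div q)*q + r < M*q"
      by (simp add: block_index_less less_mult_imp_div_less)
    have "mmul (M*q) (M*q) (identity_row q M) (block_diag q M z) (idmat (M*q)) r c b
        = (\<Sum>s<M*q. identity_row q M r s * block_diag q M z s c b)"
      using True by (simp add: mmul_idmat_right)
    also have "\<dots> = (\<Sum>s<M*q. if s = (c div q)*q + r then z (c div q) r (c mod q) b / sqrt M else 0)"
      using True by (intro sum.cong refl identity_row_mult_block_diag) auto
    also have "\<dots> = block_row q M z r c b"
      using True \<open>(c div q)*q + r < M*q\<close> by (simp add: block_row_def)
    finally show ?thesis ..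
  next
    case False
    have "identity_row q M r s = 0" if "c < M*q" for s
      using False that by (simp add: identity_row_def)
    moreover have "z (c div q) r (c mod q) b = 0" if "c < M*q"
      using False z[OF less_mult_imp_div_less[OF that]] that unfolding mats_def by blast
    ultimately show ?thesis
      by (simp add: mmul_idmat_right block_row_def)
  qed
qed

lemma block_col_eq_mmul:
  assumes z: "\<And>m. m < M \<Longrightarrow> z m \<in> mats q q B"
  shows "block_col q M z = mmul (M*q) (M*q) (idmat (M*q)) (block_diag q M z) (identity_col q M)"
proof (intro ext)
  fix s c b
  show "block_col q M z s c b
      = mmul (M*q) (M*q) (idmat (M*q)) (block_diag q M z) (identity_col q M) s c b"
  proof (cases "c < q \<and> s < M*q")
    case True
    then have "(s div q)*q + c < M*q"
      by (simp add: block_index_less less_mult_imp_div_less)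
    have "mmul (M*q) (M*q) (idmat (M*q)) (block_diag q M z) (identity_col q M) s c b
        = (\<Sum>t<M*q. block_diag q M z s t b * identity_col q M t c)"
      using True by (simp add: mmul_idmat_left)
    also have "\<dots> = (\<Sum>t<M*q. if t = (s div q)*q + c then z (s div q) (s mod q) c b / sqrt M else 0)"
      using True by (intro sum.cong refl block_diag_mult_identity_col) auto
    also have "\<dots> = block_col q M z s c b"
      using True \<open>(s div q)*q + c < M*q\<close> by (simp add: block_col_def)
    finally show ?thesis ..
  next
    case False
    have "identity_col q M t c = 0" if "s < M*q" for t
      using False that by (simp add: identity_col_def identity_row_def)
    moreover have "z (s div q) (s mod q) c b = 0" if "s < M*q"
      using False z[OF less_mult_imp_div_less[OF that]] that unfolding mats_def by blast
    ultimately show ?thesis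
      by (simp add: mmul_idmat_left block_col_def)
  qed
qed

lemma norm_block_row_le:
  assumes N: "opspace N B" and z: "\<And>m. m < M \<Longrightarrow> z m \<in> mats q q B"
    and bound: "\<And>m. m < M \<Longrightarrow> N q (z m) \<le> a" and a: "0 \<le> a"
  shows "N (M*q) (block_row q M z) \<le> a"
proof -
  have D: "block_diag q M z \<in> mats (M*q) (M*q) B"
    using z by (rule block_diag_mats)
  have diag_bound: "N (M*q) (block_diag q M z) \<le> a"
    using N z bound a by (rule norm_block_diag_le)
  have "N (M*q) (block_row q M z) \<le> opnorm (M*q) (M*q) (identity_row q M)
      * N (M*q) (block_diag q M z) * opnorm (M*q) (M*q) (idmat (M*q))"
    using opspace_mmul[OF N identity_row_smats D idmat_smats] block_row_eq_mmul[of M z q B] z by simp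
  also have "\<dots> \<le> 1 * a * 1"
    using opnorm_identity_row opnorm_idmat diag_bound opspace_nonneg[OF N D] a
    by (intro mult_mono) auto
  finally show ?thesis
    by simp
qed

lemma norm_block_col_le:
  assumes N: "opspace N B" and z: "\<And>m. m < M \<Longrightarrow> z m \<in> mats q q B"
    and bound: "\<And>m. m < M \<Longrightarrow> N q (z m) \<le> a" and a: "0 \<le> a"
  shows "N (M*q) (block_col q M z) \<le> a"
proof -
  have D: "block_diag q M z \<in> mats (M*q) (M*q) B"
    using z by (rule block_diag_mats)
  have diag_bound: "N (M*q) (block_diag q M z) \<le> a"
    using N z bound a by (rule norm_block_diag_le)
  have "N (M*q) (block_col q M z) \<le> opnorm (M*q) (M*q) (idmat (M*q))
      * N (M*q) (block_diag q M z) * opnorm (M*q) (M*q) (identity_col q M)"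
    using opspace_mmul[OF N idmat_smats D identity_col_smats] block_col_eq_mmul[of M z q B] z by simp
  also have "\<dots> \<le> 1 * a * 1"
    using opnorm_identity_col opnorm_idmat diag_bound opspace_nonneg[OF N D] a
    by (intro mult_mono) auto
  finally show ?thesis
    by simp
qed

lemma htens_block_row_col:
  "htens (M*q) (block_row q M z) (block_col q M w) r c ij = (\<Sum>m<M. htens q (z m) (w m) r c ij) / M"
proof -
  have sqrt_sq: "complex_of_real (sqrt M) * complex_of_real (sqrt M) = of_nat M"
    by (simp flip: of_real_mult)
  have "htens (M*q) (block_row q M z) (block_col q M w) r c ij
      = (\<Sum>m<M. \<Sum>t<q. block_row q M z r (m*q + t) (fst ij) * block_col q M w (m*q + t) c (snd ij))"
    unfolding htens_def by (rule sum_lessThan_mult_nat)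
  also have "\<dots> = (\<Sum>m<M. \<Sum>t<q. z m r t (fst ij) * w m t c (snd ij) / M)"
    by (intro sum.cong refl)
      (simp add: block_row_def block_col_def block_index block_index_less sqrt_sq)
  also have "\<dots> = (\<Sum>m<M. htens q (z m) (w m) r c ij) / M"
    by (simp add: htens_def sum_divide_distrib)
  finally show ?thesis .
qed

lemma htens_mono_width:
  assumes x: "x \<in> mats n p B" and "p \<le> q"
  shows "htens q x y = htens p x y"
proof -
  have "x r t i = 0" if "p \<le> t" for r t i
    using x that unfolding mats_def by fastforce
  then show ?thesis
    unfolding htens_def using \<open>p \<le> q\<close> by (intro ext sum.mono_neutral_right) auto
qed

section \<open>Averaging over sign changes\<close>

lemma sum_sign_vectors_mult:
  fixes i j k :: nat
  defines "S \<equiv> PiE {..<k} (\<lambda>_. {-1, 1::real})"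
  assumes "i < k" "j < k"
  shows "(\<Sum>e\<in>S. e i * e j) = (if i = j then real (card S) else 0)"
proof (cases "i = j")
  case True
  have "(\<Sum>e\<in>S. e i * e j) = (\<Sum>e\<in>S. 1)"
  proof (rule sum.cong[OF refl])
    fix e assume "e \<in> S"
    then have "e i = -1 \<or> e i = 1"
      using \<open>i < k\<close> unfolding S_def by blast
    with True show "e i * e j = 1"
      by auto
  qed
  with True show ?thesis
    by simp
next
  case False
  define flip where "flip e = e(i := - e i)" for e :: "nat \<Rightarrow> real"
  have flip_S: "flip e \<in> S" if "e \<in> S" for e
    using that \<open>i < k\<close> unfolding S_def flip_def PiE_def extensional_def Pi_def by auto
  have "bij_betw flip S S"
    by (rule bij_betwI[of flip S S flip]) (use flip_S in \<open>auto simp: flip_def\<close>)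
  then have "(\<Sum>e\<in>S. e i * e j) = (\<Sum>e\<in>S. flip e i * flip e j)"
    by (rule sum.reindex_bij_betw[symmetric])
  also have "\<dots> = - (\<Sum>e\<in>S. e i * e j)"
    using False by (simp add: flip_def sum_negf)
  finally show ?thesis
    using False by simp
qed

lemma orthogonal_sign_vectors_exist:
  obtains M :: nat and g :: "nat \<Rightarrow> nat \<Rightarrow> real"
  where "0 < M" "\<And>m i. m < M \<Longrightarrow> i < k \<Longrightarrow> g m i \<in> {-1, 1}"
    "\<And>i j. i < k \<Longrightarrow> j < k \<Longrightarrow> (\<Sum>m<M. g m i * g m j) = (if i = j then real M else 0)"
proof -
  define S where "S = PiE {..<k} (\<lambda>_. {-1, 1::real})"
  have "finite S" "S \<noteq> {}"
    by (simp_all add: S_def finite_PiE PiE_eq_empty_iff)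
  then obtain g where g: "bij_betw g {..<card S} S"
    using ex_bij_betw_nat_finite lessThan_atLeast0 by metis
  show ?thesis
  proof
    show "0 < card S"
      using \<open>finite S\<close> \<open>S \<noteq> {}\<close> by (simp add: card_gt_0_iff)
    show "g m i \<in> {-1, 1}" if "m < card S" "i < k" for m i
      using bij_betwE[OF g] that unfolding S_def by auto
    show "(\<Sum>m<card S. g m i * g m j) = (if i = j then real (card S) else 0)"
      if "i < k" "j < k" for i j
      using sum.reindex_bij_betw[OF g, of "\<lambda>e. e i * e j"] sum_sign_vectors_mult[OF that]
      unfolding S_def by simp
  qed
qed

definition sign_flip :: "(nat \<Rightarrow> real) \<Rightarrow> (nat \<Rightarrow> complex) \<Rightarrow> nat \<Rightarrow> complex" where
  "sign_flip \<epsilon> v = (\<lambda>i. of_real (\<epsilon> i) * v i)"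

lemma ampl_sign_flip_mats: "x \<in> mats n p B \<Longrightarrow> ampl (sign_flip \<epsilon>) x \<in> mats n p B"
  by (auto simp: mats_def ampl_def sign_flip_def)

lemma compl_1_uncond_norm_le:
  assumes "compl_1_uncond N k" "\<And>i. i < k \<Longrightarrow> \<epsilon> i \<in> {-1, 1}" "x \<in> mats n n {..<k}"
  shows "N n (ampl (sign_flip \<epsilon>) x) \<le> N n x"
proof -
  have "completely_contractive N N {..<k} (sign_flip \<epsilon>)"
    using assms(1,2) unfolding compl_1_uncond_def sign_flip_def[abs_def] by blast
  with assms(3) show ?thesis
    unfolding completely_contractive_def by blast
qed

lemma sum_htens_sign_flip:
  assumes x: "x \<in> mats n p {..<k}" and y: "y \<in> mats p n' {..<k}"
    and orth: "\<And>i j. i < k \<Longrightarrow> j < k \<Longrightarrow> (\<Sum>m<M. g m i * g m j) = (if i = j then real M else 0)"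
  shows "(\<Sum>m<M. htens p (ampl (sign_flip (g m)) x) (ampl (sign_flip (g m)) y) r c ij)
    = M * ampl diagproj (htens p x y) r c ij"
proof -
  obtain i j where ij: "ij = (i, j)"
    by fastforce
  have "(\<Sum>m<M. htens p (ampl (sign_flip (g m)) x) (ampl (sign_flip (g m)) y) r c ij)
      = (\<Sum>t<p. of_real (\<Sum>m<M. g m i * g m j) * (x r t i * y t c j))"
    unfolding htens_def ampl_def sign_flip_def ij
    by (subst sum.swap) (simp add: of_real_sum sum_distrib_left mult_ac)
  also have "\<dots> = M * ampl diagproj (htens p x y) r c ij"
  proof (cases "i < k \<and> j < k")
    case True
    then show ?thesis
      by (simp add: orth ampl_def diagproj_def htens_def ij sum_distrib_left)
  next
    case False
    then have "x r t i * y t c j = 0" for t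
      using x y unfolding mats_def by fastforce
    then show ?thesis
      by (cases "i = j") (simp_all add: ampl_def diagproj_def htens_def ij del: mult_eq_0_iff)
  qed
  finally show ?thesis .
qed

section \<open>The diagonal projection on the Haagerup tensor product\<close>

lemma opspace_nonneg_rect: "opspace N B \<Longrightarrow> x \<in> mats n p B \<Longrightarrow> 0 \<le> N (max n p) x"
  by (erule opspace_nonneg) (auto elim: mats_mono)

lemma norm_block_row_sign_flip_le:
  assumes N: "opspace N {..<k}" and unc: "compl_1_uncond N k"
    and g: "\<And>m i. m < M \<Longrightarrow> i < k \<Longrightarrow> g m i \<in> {-1, 1}" and x: "x \<in> mats q q {..<k}"
  shows "N (M*q) (block_row q M (\<lambda>m. ampl (sign_flip (g m)) x)) \<le> N q x"
proof (rule norm_block_row_le[OF N])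
  show "ampl (sign_flip (g m)) x \<in> mats q q {..<k}" for m
    using x by (rule ampl_sign_flip_mats)
  show "N q (ampl (sign_flip (g m)) x) \<le> N q x" if "m < M" for m
    using unc g[OF that] x by (rule compl_1_uncond_norm_le)
qed (rule opspace_nonneg[OF N x])

lemma norm_block_col_sign_flip_le:
  assumes N: "opspace N {..<k}" and unc: "compl_1_uncond N k"
    and g: "\<And>m i. m < M \<Longrightarrow> i < k \<Longrightarrow> g m i \<in> {-1, 1}" and y: "y \<in> mats q q {..<k}"
  shows "N (M*q) (block_col q M (\<lambda>m. ampl (sign_flip (g m)) y)) \<le> N q y"
proof (rule norm_block_col_le[OF N])
  show "ampl (sign_flip (g m)) y \<in> mats q q {..<k}" for m
    using y by (rule ampl_sign_flip_mats)
  show "N q (ampl (sign_flip (g m)) y) \<le> N q y" if "m < M" for m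
    using unc g[OF that] y by (rule compl_1_uncond_norm_le)
qed (rule opspace_nonneg[OF N y])

lemma diagproj_htens_eq_block_row_col:
  assumes x: "x \<in> mats n q {..<k}" and y: "y \<in> mats q n {..<k}" and "0 < M"
    and orth: "\<And>i j. i < k \<Longrightarrow> j < k \<Longrightarrow> (\<Sum>m<M. g m i * g m j) = (if i = j then real M else 0)"
  shows "ampl diagproj (htens q x y)
    = htens (M*q) (block_row q M (\<lambda>m. ampl (sign_flip (g m)) x))
                  (block_col q M (\<lambda>m. ampl (sign_flip (g m)) y))"
proof (intro ext)
  fix r c ij
  have "htens (M*q) (block_row q M (\<lambda>m. ampl (sign_flip (g m)) x))
                    (block_col q M (\<lambda>m. ampl (sign_flip (g m)) y)) r c ij
      = (\<Sum>m<M. htens q (ampl (sign_flip (g m)) x) (ampl (sign_flip (g m)) y) r c ij) / M"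
    by (rule htens_block_row_col)
  also have "\<dots> = ampl diagproj (htens q x y) r c ij"
    using sum_htens_sign_flip[where r=r and c=c and ij=ij, OF x y orth] \<open>0 < M\<close> by simp
  finally show "ampl diagproj (htens q x y) r c ij
      = htens (M*q) (block_row q M (\<lambda>m. ampl (sign_flip (g m)) x))
                    (block_col q M (\<lambda>m. ampl (sign_flip (g m)) y)) r c ij"
    by simp
qed

text \<open>The factors are first padded to the square size q = max n p, which is what the Haagerup
  norm measures them in.\<close>
lemma diagproj_htens_factorization:
  assumes N1: "opspace N1 {..<k}" and N2: "opspace N2 {..<k}"
    and u1: "compl_1_uncond N1 k" and u2: "compl_1_uncond N2 k"
    and x: "x \<in> mats n p {..<k}" and y: "y \<in> mats p n {..<k}"
  obtains P X Y where "X \<in> mats n P {..<k}" "Y \<in> mats P n {..<k}"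
    "ampl diagproj (htens p x y) = htens P X Y"
    "N1 (max n P) X \<le> N1 (max n p) x" "N2 (max P n) Y \<le> N2 (max p n) y"
proof (cases "p = 0")
  case True
  then have "ampl diagproj (htens p x y) = htens p x y"
    by (simp add: htens_def ampl_def diagproj_def)
  with x y that show ?thesis
    by blast
next
  case False
  define q where "q = max n p"
  have q: "n \<le> q" "p \<le> q"
    by (simp_all add: q_def)
  obtain M g where M: "0 < M" and g: "\<And>m i. m < M \<Longrightarrow> i < k \<Longrightarrow> g m i \<in> {-1, 1}"
    and orth: "\<And>i j. i < k \<Longrightarrow> j < k \<Longrightarrow> (\<Sum>m<M. g m i * g m j) = (if i = j then real M else 0)"
    using orthogonal_sign_vectors_exist[where k=k] by blast
  define X where "X = block_row q M (\<lambda>m. ampl (sign_flip (g m)) x)"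
  define Y where "Y = block_col q M (\<lambda>m. ampl (sign_flip (g m)) y)"
  have xq: "x \<in> mats n q {..<k}" "x \<in> mats q q {..<k}"
    using mats_mono[OF x order_refl q(2)] mats_mono[OF x q] .
  have yq: "y \<in> mats q n {..<k}" "y \<in> mats q q {..<k}"
    using mats_mono[OF y q(2) order_refl] mats_mono[OF y q(2,1)] .
  have "X \<in> mats n (M*q) {..<k}" "Y \<in> mats (M*q) n {..<k}"
    unfolding X_def Y_def
    by (rule block_row_mats, rule ampl_sign_flip_mats, rule xq(1))
      (rule block_col_mats, rule ampl_sign_flip_mats, rule yq(1))
  moreover have "ampl diagproj (htens p x y) = htens (M*q) X Y"
    using diagproj_htens_eq_block_row_col[OF xq(1) yq(1) M orth] htens_mono_width[OF x q(2)]
    unfolding X_def Y_def by simp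
  moreover have "N1 (M*q) X \<le> N1 q x"
    unfolding X_def using N1 u1 g xq(2) by (rule norm_block_row_sign_flip_le)
  moreover have "N2 (M*q) Y \<le> N2 q y"
    unfolding Y_def using N2 u2 g yq(2) by (rule norm_block_col_sign_flip_le)
  moreover have "n \<le> M*q"
    using q(1) M by (cases M) auto
  then have "max n (M*q) = M*q" "max (M*q) n = M*q" "max n p = q" "max p n = q"
    by (simp_all add: q_def max.commute)
  ultimately show ?thesis
    using that by simp
qed

lemma hnorm_le:
  assumes N1: "opspace N1 {..<k}" and N2: "opspace N2 {..<k}"
    and "x \<in> mats n p {..<k}" "y \<in> mats p n {..<k}"
  shows "hnorm N1 N2 k n (htens p x y) \<le> N1 (max n p) x * N2 (max p n) y"
proof -
  let ?S = "{N1 (max n p') x' * N2 (max p' n) y' | p' x' y'.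
      x' \<in> mats n p' {..<k} \<and> y' \<in> mats p' n {..<k} \<and> htens p x y = htens p' x' y'}"
  have "N1 (max n p) x * N2 (max p n) y \<in> ?S"
    using assms(3,4) by blast
  moreover have "bdd_below ?S"
    using opspace_nonneg_rect[OF N1] opspace_nonneg_rect[OF N2] by (intro bdd_belowI[of _ 0]) auto
  ultimately show ?thesis
    unfolding hnorm_def by (rule cInf_lower)
qed

lemma htens_factorization_exists:
  assumes u: "u \<in> mats n n ({..<k} \<times> {..<k})"
  shows "\<exists>p x y. x \<in> mats n p {..<k} \<and> y \<in> mats p n {..<k} \<and> u = htens p x y"
proof -
  define x where "x = (\<lambda>r s i. u r (s div k) (i, s mod k))"
  define y where "y = (\<lambda>s c j. if s < n*k \<and> s div k = c \<and> s mod k = j then 1 else 0 :: complex)"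
  have uz: "u r c (i, j) = 0" if "\<not> (r < n \<and> c < n \<and> i < k \<and> j < k)" for r c i j
    using u that unfolding mats_def by blast
  have mod_k: "s mod k < k" if "s < n*k" for s
    using that by (cases "k = 0") simp_all
  have "x \<in> mats n (n*k) {..<k}"
    unfolding mats_def
  proof (intro CollectI allI impI)
    fix r s i
    assume "x r s i \<noteq> 0"
    then have "r < n" "s div k < n" "i < k"
      using uz unfolding x_def by blast+
    then show "r < n \<and> s < n*k \<and> i \<in> {..<k}"
      by (simp add: div_less_iff_less_mult)
  qed
  moreover have "y \<in> mats (n*k) n {..<k}"
    using mod_k by (auto simp: mats_def y_def less_mult_imp_div_less)
  moreover have "u = htens (n*k) x y"
  proof (intro ext)
    fix r c :: nat and ij :: "nat \<times> nat"
    obtain i j where ij: "ij = (i, j)"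
      by fastforce
    show "u r c ij = htens (n*k) x y r c ij"
    proof (cases "c < n \<and> j < k")
      case True
      have "x r s i * y s c j = (if s = c*k + j then u r c (i, j) else 0)" for s
      proof (cases "s = c*k + j")
        case True
        with \<open>c < n \<and> j < k\<close> show ?thesis
          by (simp add: x_def y_def block_index block_index_less)
      next
        case False
        with \<open>c < n \<and> j < k\<close> show ?thesis
          by (auto simp: y_def div_mod_eq_iff)
      qed
      with True show ?thesis
        by (simp add: htens_def ij block_index_less)
    next
      case False
      then have "y s c j = 0" for s
        using mod_k by (auto simp: y_def less_mult_imp_div_less)
      with False show ?thesis
        by (simp add: htens_def ij uz)
    qed
  qed
  ultimately show ?thesis
    by blast
qed

lemma hnorm_diagproj_htens_le:
  assumes N1: "opspace N1 {..<k}" and N2: "opspace N2 {..<k}"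
    and "compl_1_uncond N1 k" "compl_1_uncond N2 k"
    and x: "x \<in> mats n p {..<k}" and y: "y \<in> mats p n {..<k}"
  shows "hnorm N1 N2 k n (ampl diagproj (htens p x y)) \<le> N1 (max n p) x * N2 (max p n) y"
proof -
  obtain P X Y where XY: "X \<in> mats n P {..<k}" "Y \<in> mats P n {..<k}"
    "ampl diagproj (htens p x y) = htens P X Y"
    and norms: "N1 (max n P) X \<le> N1 (max n p) x" "N2 (max P n) Y \<le> N2 (max p n) y"
    by (rule diagproj_htens_factorization[OF assms])
  have "hnorm N1 N2 k n (ampl diagproj (htens p x y)) \<le> N1 (max n P) X * N2 (max P n) Y"
    unfolding XY(3) using N1 N2 XY(1,2) by (rule hnorm_le)
  also have "\<dots> \<le> N1 (max n p) x * N2 (max p n) y"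
    using norms opspace_nonneg_rect[OF N1 x] opspace_nonneg_rect[OF N2 XY(2)] by (rule mult_mono)
  finally show ?thesis .
qed

theorem lemma5p2:
  fixes N1 N2 :: "nat \<Rightarrow> nat emat \<Rightarrow> real" and k :: nat
  assumes "opspace N1 {..<k}" and "opspace N2 {..<k}"
    and "compl_1_uncond N1 k" and "compl_1_uncond N2 k"
  shows "completely_contractive (hnorm N1 N2 k) (hnorm N1 N2 k) ({..<k} \<times> {..<k}) diagproj"
  unfolding completely_contractive_def
proof (intro allI ballI)
  fix n and u :: "(nat \<times> nat) emat"
  assume u: "u \<in> mats n n ({..<k} \<times> {..<k})"
  have "hnorm N1 N2 k n (ampl diagproj u) \<le> Inf {N1 (max n p) x * N2 (max p n) y | p x y.
      x \<in> mats n p {..<k} \<and> y \<in> mats p n {..<k} \<and> u = htens p x y}" (is "_ \<le> Inf ?S")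
  proof (rule cInf_greatest)
    show "?S \<noteq> {}"
      using htens_factorization_exists[OF u] by blast
  next
    fix t
    assume "t \<in> ?S"
    then show "hnorm N1 N2 k n (ampl diagproj u) \<le> t"
      using hnorm_diagproj_htens_le[OF assms] by auto
  qed
  then show "hnorm N1 N2 k n (ampl diagproj u) \<le> hnorm N1 N2 k n u"
    unfolding hnorm_def[where u = u] .
qed

end
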